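(* Let $f(a)=\alpha_d a^d+\dots+\alpha_1 a+\alpha_0$ be a real polynomial of degree $d\ge 1$ (so $\alpha_d\neq 0$), and let $S$ be the set of real roots of $f$ lying in the open interval $(0,1)$. Then there is a $3$-person game in which the first player has two pure strategies and the second and third players each have $\lceil d/2\rceil+1$ pure strategies, such that, letting $E$ denote the set of totally mixed Nash equilibria of this game, the projection of $E$ onto the probability that the first player plays her first pure strategy equals $S$, and $\#E=\#S$.
   Context: A finite normal form game consists of players $I=\{1,\dots,N\}$, finite pure strategy sets $S_i=\{s_{i0},\dots,s_{id_i}\}$, and payoffs $u_i:\prod_i S_i\to\mathbb{R}$. A mixed strategy of player $i$ is a probability vector $\sigma_i$ on $S_i$; expected payoffs are multilinear: $u_i(\sigma)=\sum_{s}u_i(s)\prod_k\sigma_k(s_k)$, and $u_i(s_{ij},\sigma_{-i})$ denotes player $i$'s expected payoff when $i$ plays $s_{ij}$ and the others play according to $\sigma$. A profile $\sigma$ is a totally mixed Nash equilibrium if $0<\sigma_i(s_{ij})<1$ for all $i,j$ and $u_i(s_{ij},\sigma_{-i})=u_i(s_{i0},\sigma_{-i})$ for all $i$ and $j=1,\dots,d_i$. *)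

theory Defs
  imports Complex_Main "HOL-Computational_Algebra.Polynomial"
begin

(* A finite normal form game with N = length ns players; player i has pure
   strategies 0,...,ns!i - 1 (strategy 0 is s_{i0}); payoffs u i s for a pure
   profile s (a list of length N). Mixed profiles are lists of probability
   vectors: sigma!i!j = probability player i plays strategy j. *)

definition pure_profiles :: "nat list \<Rightarrow> nat list set" where
  "pure_profiles ns = {s. length s = length ns \<and> (\<forall>k<length ns. s!k < ns!k)}"

definition dev_payoff ::
  "nat list \<Rightarrow> (nat \<Rightarrow> nat list \<Rightarrow> real) \<Rightarrow> nat \<Rightarrow> nat \<Rightarrow> real list list \<Rightarrow> real" where
  "dev_payoff ns u i j \<sigma> =
     (\<Sum>s\<in>{s\<in>pure_profiles ns. s!i = j}.
        u i s * (\<Prod>k\<in>{..<length ns} - {i}. \<sigma>!k!(s!k)))"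

definition mixed_profile :: "nat list \<Rightarrow> real list list \<Rightarrow> bool" where
  "mixed_profile ns \<sigma> \<longleftrightarrow> length \<sigma> = length ns \<and>
     (\<forall>i<length ns. length (\<sigma>!i) = ns!i \<and> (\<forall>j<ns!i. 0 \<le> \<sigma>!i!j)
        \<and> sum_list (\<sigma>!i) = 1)"

definition totally_mixed_NE ::
  "nat list \<Rightarrow> (nat \<Rightarrow> nat list \<Rightarrow> real) \<Rightarrow> real list list \<Rightarrow> bool" where
  "totally_mixed_NE ns u \<sigma> \<longleftrightarrow> mixed_profile ns \<sigma> \<and>
     (\<forall>i<length ns. \<forall>j<ns!i. 0 < \<sigma>!i!j \<and> \<sigma>!i!j < 1) \<and>
     (\<forall>i<length ns. \<forall>j. 1 \<le> j \<and> j < ns!i \<longrightarrow>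
        dev_payoff ns u i j \<sigma> = dev_payoff ns u i 0 \<sigma>)"

end

(* Let a be the probability of the first player's first strategy. The second and third players
   have strategies 0..n, n = ceil(d/2), and are paid so that indifference of either of them between
   strategy j and strategy 0 reads p_j = a p_(j-1) for the distribution p of the other one. So in a
   totally mixed equilibrium both play the geometric distribution a^k / (1 + a + ... + a^n). The
   first player's second strategy pays a bilinear form in these two distributions which equals
   f(a) / (1 + ... + a^n)^2 on geometric vectors, since each coefficient of f sits at an entry (y, z)
   with y + z equal to its degree. Hence the first player is indifferent iff f(a) = 0, and the
   equilibria correspond bijectively to the roots of f in (0, 1). *)

theory Submission
  imports Defs
begin

definition totally_mixed :: "nat \<Rightarrow> real list \<Rightarrow> bool" where
  "totally_mixed k p \<longleftrightarrow> length p = k \<and> (\<forall>j<k. 0 < p!j \<and> p!j < 1) \<and> sum_list p = 1"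

definition indifferent ::
  "nat list \<Rightarrow> (nat \<Rightarrow> nat list \<Rightarrow> real) \<Rightarrow> real list list \<Rightarrow> nat \<Rightarrow> bool" where
  "indifferent ns u \<sigma> i \<longleftrightarrow>
     (\<forall>j. 1 \<le> j \<and> j < ns!i \<longrightarrow> dev_payoff ns u i j \<sigma> = dev_payoff ns u i 0 \<sigma>)"

lemma totally_mixed_NE_iff:
  "totally_mixed_NE ns u \<sigma> \<longleftrightarrow> length \<sigma> = length ns \<and>
     (\<forall>i<length ns. totally_mixed (ns!i) (\<sigma>!i) \<and> indifferent ns u \<sigma> i)"
  unfolding totally_mixed_NE_def mixed_profile_def totally_mixed_def indifferent_def
  by (auto intro: less_imp_le)

lemma totally_mixed_NE_three:
  "totally_mixed_NE [a, b, c] u \<sigma> \<longleftrightarrow> (\<exists>p q r. \<sigma> = [p, q, r] \<and>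
     totally_mixed a p \<and> totally_mixed b q \<and> totally_mixed c r \<and>
     indifferent [a, b, c] u \<sigma> 0 \<and> indifferent [a, b, c] u \<sigma> 1 \<and> indifferent [a, b, c] u \<sigma> 2)"
  unfolding totally_mixed_NE_iff
  by (auto simp: length_Suc_conv numeral_eq_Suc All_less_Suc2)

lemma totally_mixed_iff_pos:
  assumes "2 \<le> k"
  shows "totally_mixed k p \<longleftrightarrow> length p = k \<and> (\<forall>j<k. 0 < p!j) \<and> sum_list p = 1"
proof (intro iffI)
  assume p: "length p = k \<and> (\<forall>j<k. 0 < p!j) \<and> sum_list p = 1"
  have "p!j < 1" if j: "j < k" for j
  proof -
    have "(if j = 0 then 1 else 0) \<in> {..<k} - {j}" using assms by auto
    then have "{..<k} - {j} \<noteq> {}" by blast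
    then have "0 < (\<Sum>i\<in>{..<k} - {j}. p!i)" using p by (intro sum_pos) auto
    moreover have "sum_list p = p!j + (\<Sum>i\<in>{..<k} - {j}. p!i)"
      using p j by (simp add: sum_list_sum_nth atLeast0LessThan sum.remove)
    ultimately show ?thesis using p by linarith
  qed
  then show "totally_mixed k p" using p unfolding totally_mixed_def by blast
qed (auto simp: totally_mixed_def)

lemma totally_mixed_two: "totally_mixed 2 p \<longleftrightarrow> (\<exists>a. p = [a, 1 - a] \<and> 0 < a \<and> a < 1)"
  by (auto simp: totally_mixed_def length_Suc_conv numeral_eq_Suc All_less_Suc2)

lemma pure_profiles_three:
  "pure_profiles [a, b, c] = (\<lambda>(x, y, z). [x, y, z]) ` ({..<a} \<times> {..<b} \<times> {..<c})"
proof (intro set_eqI iffI)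
  fix s assume "s \<in> pure_profiles [a, b, c]"
  then have len: "length s = 3" and bounds: "\<forall>k<3. s!k < [a, b, c]!k"
    unfolding pure_profiles_def by auto
  from len have "s = [s!0, s!1, s!2]"
    by (auto intro!: nth_equalityI simp: less_Suc_eq numeral_eq_Suc)
  moreover have "s!0 < a" "s!1 < b" "s!2 < c"
    using bounds[rule_format, of 0] bounds[rule_format, of 1] bounds[rule_format, of 2] by simp_all
  ultimately show "s \<in> (\<lambda>(x, y, z). [x, y, z]) ` ({..<a} \<times> {..<b} \<times> {..<c})"
    by (auto intro!: image_eqI[where x = "(s!0, s!1, s!2)"])
qed (auto simp: pure_profiles_def less_Suc_eq numeral_eq_Suc)

lemma dev_payoff_three_0:
  assumes "j < a"
  shows "dev_payoff [a, b, c] u 0 j \<sigma> = (\<Sum>y<b. \<Sum>z<c. u 0 [j, y, z] * (\<sigma>!1!y * \<sigma>!2!z))"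
proof -
  have "{s \<in> pure_profiles [a, b, c]. s!0 = j} = (\<lambda>(y, z). [j, y, z]) ` ({..<b} \<times> {..<c})"
    using assms unfolding pure_profiles_three by (auto simp: image_iff)
  moreover have "inj_on (\<lambda>(y, z). [j, y, z]) ({..<b} \<times> {..<c})" by (auto simp: inj_on_def)
  moreover have "{..<length [a, b, c]} - {0} = {1, 2::nat}" by auto
  ultimately show ?thesis
    unfolding dev_payoff_def by (simp add: sum.reindex sum.cartesian_product split_def)
qed

lemma dev_payoff_three_1:
  assumes "j < b"
  shows "dev_payoff [a, b, c] u 1 j \<sigma> = (\<Sum>x<a. \<Sum>z<c. u 1 [x, j, z] * (\<sigma>!0!x * \<sigma>!2!z))"
proof -
  have "{s \<in> pure_profiles [a, b, c]. s!1 = j} = (\<lambda>(x, z). [x, j, z]) ` ({..<a} \<times> {..<c})"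
    using assms unfolding pure_profiles_three by (auto simp: image_iff)
  moreover have "inj_on (\<lambda>(x, z). [x, j, z]) ({..<a} \<times> {..<c})" by (auto simp: inj_on_def)
  moreover have "{..<length [a, b, c]} - {1} = {0, 2::nat}" by auto
  ultimately show ?thesis
    unfolding dev_payoff_def by (simp add: sum.reindex sum.cartesian_product split_def)
qed

lemma dev_payoff_three_2:
  assumes "j < c"
  shows "dev_payoff [a, b, c] u 2 j \<sigma> = (\<Sum>x<a. \<Sum>y<b. u 2 [x, y, j] * (\<sigma>!0!x * \<sigma>!1!y))"
proof -
  have "{s \<in> pure_profiles [a, b, c]. s!2 = j} = (\<lambda>(x, y). [x, y, j]) ` ({..<a} \<times> {..<b})"
    using assms unfolding pure_profiles_three by (auto simp: image_iff)
  moreover have "inj_on (\<lambda>(x, y). [x, y, j]) ({..<a} \<times> {..<b})" by (auto simp: inj_on_def)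
  moreover have "{..<length [a, b, c]} - {2} = {0, 1::nat}" by auto
  ultimately show ?thesis
    unfolding dev_payoff_def by (simp add: sum.reindex sum.cartesian_product split_def)
qed

definition geom_dist :: "nat \<Rightarrow> real \<Rightarrow> real list" where
  "geom_dist n a = map (\<lambda>k. a^k / (\<Sum>i\<le>n. a^i)) [0..<Suc n]"

lemma geom_sum_ge_1: "0 \<le> (a::real) \<Longrightarrow> 1 \<le> (\<Sum>i\<le>n. a^i)"
  using member_le_sum[of 0 "{..n}" "\<lambda>i. a^i"] by simp

lemma length_geom_dist [simp]: "length (geom_dist n a) = Suc n"
  by (simp add: geom_dist_def)

lemma nth_geom_dist [simp]: "k \<le> n \<Longrightarrow> geom_dist n a ! k = a^k / (\<Sum>i\<le>n. a^i)"
  by (simp add: geom_dist_def del: upt_Suc)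

lemma sum_list_geom_dist: "0 \<le> a \<Longrightarrow> sum_list (geom_dist n a) = 1"
  using geom_sum_ge_1[of a n]
  by (simp add: sum_list_sum_nth atLeast0LessThan lessThan_Suc_atMost sum_divide_distrib[symmetric]
      del: upt_Suc)

lemma geom_dist_step: "1 \<le> j \<Longrightarrow> j \<le> n \<Longrightarrow> geom_dist n a ! j = a * geom_dist n a ! (j - 1)"
  by (cases j) auto

lemma totally_mixed_geom_dist_iff:
  assumes "0 < a" "1 \<le> n"
  shows "totally_mixed (Suc n) q \<and> (\<forall>j. 1 \<le> j \<and> j \<le> n \<longrightarrow> q!j = a * q!(j - 1))
    \<longleftrightarrow> q = geom_dist n a"
proof
  assume "totally_mixed (Suc n) q \<and> (\<forall>j. 1 \<le> j \<and> j \<le> n \<longrightarrow> q!j = a * q!(j - 1))"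
  then have len: "length q = Suc n" and sum: "sum_list q = 1"
    and step: "\<And>j. 1 \<le> j \<Longrightarrow> j \<le> n \<Longrightarrow> q!j = a * q!(j - 1)"
    unfolding totally_mixed_def by auto
  have powers: "q!k = a^k * q!0" if "k \<le> n" for k
    using that
  proof (induction k)
    case (Suc k)
    then show ?case using step[of "Suc k"] by simp
  qed simp
  have "1 = (\<Sum>k\<le>n. q!k)"
    using len sum by (simp add: sum_list_sum_nth atLeast0LessThan lessThan_Suc_atMost)
  also have "\<dots> = (\<Sum>k\<le>n. a^k) * q!0"
    unfolding sum_distrib_right by (intro sum.cong refl) (rule powers, simp)
  finally have q0: "q!0 = 1 / (\<Sum>i\<le>n. a^i)"
    using geom_sum_ge_1[of a n] assms by (simp add: field_simps)
  show "q = geom_dist n a"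
  proof (rule nth_equalityI)
    fix k assume "k < length q"
    then have "k \<le> n" using len by simp
    then show "q!k = geom_dist n a ! k" using powers[of k] by (simp add: q0)
  qed (simp add: len)
next
  assume q: "q = geom_dist n a"
  have "totally_mixed (Suc n) q"
    using assms geom_sum_ge_1[of a n]
    by (simp add: q totally_mixed_iff_pos sum_list_geom_dist less_Suc_eq_le)
  then show "totally_mixed (Suc n) q \<and> (\<forall>j. 1 \<le> j \<and> j \<le> n \<longrightarrow> q!j = a * q!(j - 1))"
    using q geom_dist_step by blast
qed

definition split_coeff :: "'a::zero poly \<Rightarrow> nat \<Rightarrow> nat \<Rightarrow> nat \<Rightarrow> 'a" where
  "split_coeff f n y z = (if z = 0 then coeff f y else if y = n then coeff f (n + z) else 0)"

lemma sum_split_coeff_powers: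
  fixes f :: "'a::comm_semiring_1 poly"
  assumes "degree f \<le> 2 * n"
  shows "(\<Sum>y\<le>n. \<Sum>z\<le>n. split_coeff f n y z * (x^y * x^z)) = poly f x"
proof -
  have "(\<Sum>z\<le>n. split_coeff f n y z * (x^y * x^z)) = coeff f y * x^y
      + (if y = n then \<Sum>z\<in>{1..n}. coeff f (n + z) * x^(n + z) else 0)" for y
  proof -
    have "{..n} = insert 0 {1..n}" by auto
    then show ?thesis by (simp add: split_coeff_def power_add)
  qed
  then have "(\<Sum>y\<le>n. \<Sum>z\<le>n. split_coeff f n y z * (x^y * x^z))
      = (\<Sum>y\<le>n. coeff f y * x^y) + (\<Sum>z\<in>{1..n}. coeff f (n + z) * x^(n + z))"
    by (simp add: sum.distrib)
  also have "(\<Sum>z\<in>{1..n}. coeff f (n + z) * x^(n + z)) = (\<Sum>l = Suc n..n + n. coeff f l * x^l)"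
    using sum.shift_bounds_cl_nat_ivl[of "\<lambda>l. coeff f l * x^l" 1 n n] by (simp add: add.commute)
  also have "(\<Sum>y\<le>n. coeff f y * x^y) + \<dots> = (\<Sum>l\<le>2 * n. coeff f l * x^l)"
    by (simp add: sum_up_index_split mult_2)
  also have "\<dots> = poly (\<Sum>l\<le>2 * n. monom (coeff f l) l) x"
    by (simp add: poly_sum poly_monom)
  also have "\<dots> = poly f x"
    by (simp only: poly_as_sum_of_monoms'[OF assms])
  finally show ?thesis .
qed

lemma sum_split_coeff_geom_dist:
  assumes "degree f \<le> 2 * n"
  shows "(\<Sum>y<Suc n. \<Sum>z<Suc n. split_coeff f n y z * (geom_dist n a ! y * geom_dist n a ! z))
    = poly f a / (\<Sum>i\<le>n. a^i)^2"
  using sum_split_coeff_powers[OF assms, of a, symmetric]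
  by (simp add: lessThan_Suc_atMost sum_divide_distrib power2_eq_square)

definition tracking_payoff :: "nat \<Rightarrow> nat \<Rightarrow> nat \<Rightarrow> real" where
  "tracking_payoff s0 own other =
     (if 1 \<le> own \<and> other = own then 1 else if 1 \<le> own \<and> other = own - 1 \<and> s0 = 0 then -1 else 0)"

definition root_game :: "real poly \<Rightarrow> nat \<Rightarrow> nat \<Rightarrow> nat list \<Rightarrow> real" where
  "root_game f n i s =
     (if i = 0 then if s!0 = 1 then split_coeff f n (s!1) (s!2) else 0
      else if i = 1 then tracking_payoff (s!0) (s!1) (s!2)
      else tracking_payoff (s!0) (s!2) (s!1))"

definition root_profile :: "nat \<Rightarrow> real \<Rightarrow> real list list" where
  "root_profile n a = [[a, 1 - a], geom_dist n a, geom_dist n a]"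

lemma expected_tracking_payoff:
  assumes "1 \<le> j" "j < m"
  shows "(\<Sum>x<2. \<Sum>z<m. tracking_payoff x j z * (p!x * q!z)) = (p!0 + p!1) * q!j - p!0 * q!(j - 1)"
proof -
  have player_0: "tracking_payoff 0 j z * w = (if z = j then w else 0) - (if z = j - 1 then w else 0)"
    and player_1: "tracking_payoff 1 j z * w = (if z = j then w else 0)" for z w
    using assms(1) by (auto simp: tracking_payoff_def)
  have "(\<Sum>x<2. g x) = g 0 + g 1" for g :: "nat \<Rightarrow> real"
    by (simp add: numeral_2_eq_2)
  then show ?thesis
    using assms by (simp only: player_0 player_1) (simp add: sum_subtractf sum.delta' algebra_simps)
qed

lemma tracking_payoff_0 [simp]: "tracking_payoff x 0 z = 0"
  by (simp add: tracking_payoff_def)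

lemma indifferent_root_game_0:
  "indifferent [2, m, m] (root_game f n) [p, q, r] 0
    \<longleftrightarrow> (\<Sum>y<m. \<Sum>z<m. split_coeff f n y z * (q!y * r!z)) = 0"
proof -
  have "1 \<le> j \<and> j < 2 \<longleftrightarrow> j = 1" for j :: nat by auto
  then show ?thesis by (simp add: indifferent_def dev_payoff_three_0 root_game_def)
qed

lemma indifferent_root_game_1:
  assumes "0 < m"
  shows "indifferent [2, m, m] (root_game f n) [[a, 1 - a], q, r] 1
    \<longleftrightarrow> (\<forall>j. 1 \<le> j \<and> j < m \<longrightarrow> r!j = a * r!(j - 1))"
proof -
  have "dev_payoff [2, m, m] (root_game f n) 1 j [[a, 1 - a], q, r] = r!j - a * r!(j - 1)"
    if "1 \<le> j" "j < m" for j
    using expected_tracking_payoff[OF that, of "[a, 1 - a]" r]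
    unfolding dev_payoff_three_1[OF that(2)] by (simp add: root_game_def)
  moreover have "dev_payoff [2, m, m] (root_game f n) 1 0 [[a, 1 - a], q, r] = 0"
    unfolding dev_payoff_three_1[OF assms] by (simp add: root_game_def)
  ultimately show ?thesis by (auto simp: indifferent_def)
qed

lemma indifferent_root_game_2:
  assumes "0 < m"
  shows "indifferent [2, m, m] (root_game f n) [[a, 1 - a], q, r] 2
    \<longleftrightarrow> (\<forall>j. 1 \<le> j \<and> j < m \<longrightarrow> q!j = a * q!(j - 1))"
proof -
  have "dev_payoff [2, m, m] (root_game f n) 2 j [[a, 1 - a], q, r] = q!j - a * q!(j - 1)"
    if "1 \<le> j" "j < m" for j
    using expected_tracking_payoff[OF that, of "[a, 1 - a]" q]
    unfolding dev_payoff_three_2[OF that(2)] by (simp add: root_game_def)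
  moreover have "dev_payoff [2, m, m] (root_game f n) 2 0 [[a, 1 - a], q, r] = 0"
    unfolding dev_payoff_three_2[OF assms] by (simp add: root_game_def)
  ultimately show ?thesis by (auto simp: indifferent_def)
qed

lemma root_game_NE_iff:
  assumes deg: "degree f \<le> 2 * n" and n: "1 \<le> n"
  shows "totally_mixed_NE [2, Suc n, Suc n] (root_game f n) \<sigma>
    \<longleftrightarrow> (\<exists>a. 0 < a \<and> a < 1 \<and> poly f a = 0 \<and> \<sigma> = root_profile n a)"
proof
  assume "totally_mixed_NE [2, Suc n, Suc n] (root_game f n) \<sigma>"
  then obtain p q r where \<sigma>: "\<sigma> = [p, q, r]" and p: "totally_mixed 2 p"
    and q: "totally_mixed (Suc n) q" and r: "totally_mixed (Suc n) r"
    and indiff: "\<And>i. i < 3 \<Longrightarrow> indifferent [2, Suc n, Suc n] (root_game f n) \<sigma> i"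
    unfolding totally_mixed_NE_three by (auto simp: less_Suc_eq numeral_eq_Suc)
  from p obtain a where p_eq: "p = [a, 1 - a]" and a: "0 < a" "a < 1"
    unfolding totally_mixed_two by blast
  have "\<forall>j. 1 \<le> j \<and> j < Suc n \<longrightarrow> r!j = a * r!(j - 1)"
    using indiff[of 1] unfolding \<sigma> p_eq indifferent_root_game_1[OF zero_less_Suc] by simp
  then have r_eq: "r = geom_dist n a"
    using r totally_mixed_geom_dist_iff[OF a(1) n] less_Suc_eq_le by blast
  have "\<forall>j. 1 \<le> j \<and> j < Suc n \<longrightarrow> q!j = a * q!(j - 1)"
    using indiff[of 2] unfolding \<sigma> p_eq indifferent_root_game_2[OF zero_less_Suc] by simp
  then have q_eq: "q = geom_dist n a"
    using q totally_mixed_geom_dist_iff[OF a(1) n] less_Suc_eq_le by blast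
  have "poly f a = 0"
    using indiff[of 0] sum_split_coeff_geom_dist[OF deg] geom_sum_ge_1[of a n] a
    by (simp add: \<sigma> q_eq r_eq indifferent_root_game_0)
  then show "\<exists>a. 0 < a \<and> a < 1 \<and> poly f a = 0 \<and> \<sigma> = root_profile n a"
    using a by (auto simp: \<sigma> p_eq q_eq r_eq root_profile_def)
next
  assume "\<exists>a. 0 < a \<and> a < 1 \<and> poly f a = 0 \<and> \<sigma> = root_profile n a"
  then obtain a where a: "0 < a" "a < 1" "poly f a = 0" and \<sigma>: "\<sigma> = root_profile n a"
    by blast
  let ?\<sigma> = "[[a, 1 - a], geom_dist n a, geom_dist n a]"
  have "totally_mixed 2 [a, 1 - a]"
    using a unfolding totally_mixed_two by blast
  moreover have "totally_mixed (Suc n) (geom_dist n a)"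
    using totally_mixed_geom_dist_iff[OF a(1) n] by blast
  moreover have "indifferent [2, Suc n, Suc n] (root_game f n) ?\<sigma> 0"
    using a sum_split_coeff_geom_dist[OF deg] by (simp add: indifferent_root_game_0)
  moreover have "indifferent [2, Suc n, Suc n] (root_game f n) ?\<sigma> 1"
    unfolding indifferent_root_game_1[OF zero_less_Suc] using geom_dist_step less_Suc_eq_le by blast
  moreover have "indifferent [2, Suc n, Suc n] (root_game f n) ?\<sigma> 2"
    unfolding indifferent_root_game_2[OF zero_less_Suc] using geom_dist_step less_Suc_eq_le by blast
  ultimately show "totally_mixed_NE [2, Suc n, Suc n] (root_game f n) \<sigma>"
    unfolding \<sigma> root_profile_def totally_mixed_NE_three by blast
qed

theorem theorem3:
  fixes f :: "real poly"
  assumes "degree f \<ge> 1"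
  shows "\<exists>u :: nat \<Rightarrow> nat list \<Rightarrow> real.
    (let m = nat \<lceil>real (degree f) / 2\<rceil> + 1;
         ns = [2, m, m];
         E = {\<sigma>. totally_mixed_NE ns u \<sigma>};
         S = {a::real. 0 < a \<and> a < 1 \<and> poly f a = 0}
     in (\<lambda>\<sigma>. \<sigma>!0!0) ` E = S \<and> finite E \<and> card E = card S)"
proof -
  define n where "n = nat \<lceil>real (degree f) / 2\<rceil>"
  have "real (degree f) / 2 \<le> real n" and "1 \<le> n"
    unfolding n_def using assms by linarith+
  then have n: "1 \<le> n" and deg: "degree f \<le> 2 * n" by linarith+
  define S where "S = {a::real. 0 < a \<and> a < 1 \<and> poly f a = 0}"
  define E where "E = {\<sigma>. totally_mixed_NE [2, Suc n, Suc n] (root_game f n) \<sigma>}"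
  have E: "E = root_profile n ` S"
    unfolding E_def S_def root_game_NE_iff[OF deg n] by blast
  have first_entry: "root_profile n a ! 0 ! 0 = a" for a
    by (simp add: root_profile_def)
  then have "inj_on (root_profile n) S"
    by (metis inj_onI)
  moreover have "finite S"
    using assms poly_roots_finite[of f] unfolding S_def by (force intro: finite_subset)
  ultimately have "(\<lambda>\<sigma>. \<sigma>!0!0) ` E = S \<and> finite E \<and> card E = card S"
    by (simp add: E image_image first_entry card_image)
  then show ?thesis
    by (intro exI[of _ "root_game f n"]) (simp add: n_def S_def E_def)
qed

end
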